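(* There is a constant $c>0$ such that the Goemans–Williamson algorithm, applied to any $\gamma$-stable instance of MAXCUT on $n$ vertices with $\gamma\ge cn^3$, returns the maximal cut with high probability (probability tending to $1$ as $n\to\infty$).
   Context: An instance of MAXCUT is a vertex set $\{1,\dots,n\}$ with a symmetric $w\ge0$ with zero diagonal (matrix $W_{ij}=w(i,j)$); a maximal cut maximizes $\sum_{a\in S,b\notin S}w(a,b)$. A $\gamma$-perturbation of $w$ is $w'$ with $w\le w'\le\gamma w$ entrywise; $w$ is $\gamma$-stable if some cut is maximal for every $\gamma$-perturbation. The Goemans–Williamson algorithm: compute an optimal solution $P$ of the SDP "minimize $\sum_{i,j}P_{ij}W_{ij}$ subject to $P\succeq0$, $P_{ii}=1$"; find unit vectors $v_1,\dots,v_n\in S^{n-1}$ with $P_{ij}=\langle v_i,v_j\rangle$; sample $v\in S^{n-1}$ uniformly; return $S=\{i:\langle v,v_i\rangle>0\}$. *)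

theory Defs
  imports "HOL-Probability.Probability"
begin

text \<open>Vertices are 0,...,n-1. Vectors in R^n are extensional functions on {..<n}.\<close>

definition vinner :: "nat \<Rightarrow> (nat \<Rightarrow> real) \<Rightarrow> (nat \<Rightarrow> real) \<Rightarrow> real" where
  "vinner n x y = (\<Sum>i<n. x i * y i)"

definition vnorm :: "nat \<Rightarrow> (nat \<Rightarrow> real) \<Rightarrow> real" where
  "vnorm n x = sqrt (vinner n x x)"

abbreviation lborelN :: "nat \<Rightarrow> (nat \<Rightarrow> real) measure" where
  "lborelN n \<equiv> PiM {..<n} (\<lambda>_. lborel)"

text \<open>Uniform (normalized surface) measure on the unit sphere S^{n-1} of R^n, obtained
  as the radial projection of the uniform distribution on the punctured unit ball.\<close>
definition sphere_uniform :: "nat \<Rightarrow> (nat \<Rightarrow> real) measure" where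
  "sphere_uniform n =
     distr (uniform_measure (lborelN n)
              {x \<in> space (lborelN n). 0 < vnorm n x \<and> vnorm n x \<le> 1})
           (lborelN n) (\<lambda>x. restrict (\<lambda>i. x i / vnorm n x) {..<n})"

definition maxcut_instance :: "nat \<Rightarrow> (nat \<Rightarrow> nat \<Rightarrow> real) \<Rightarrow> bool" where
  "maxcut_instance n w \<longleftrightarrow>
     (\<forall>i<n. \<forall>j<n. 0 \<le> w i j \<and> w i j = w j i) \<and> (\<forall>i<n. w i i = 0)"

definition cut_value :: "nat \<Rightarrow> (nat \<Rightarrow> nat \<Rightarrow> real) \<Rightarrow> nat set \<Rightarrow> real" where
  "cut_value n w S = (\<Sum>a\<in>S. \<Sum>b\<in>{..<n} - S. w a b)"

definition maximal_cut :: "nat \<Rightarrow> (nat \<Rightarrow> nat \<Rightarrow> real) \<Rightarrow> nat set \<Rightarrow> bool" where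
  "maximal_cut n w S \<longleftrightarrow>
     S \<subseteq> {..<n} \<and> (\<forall>T. T \<subseteq> {..<n} \<longrightarrow> cut_value n w T \<le> cut_value n w S)"

definition perturbation :: "nat \<Rightarrow> real \<Rightarrow> (nat \<Rightarrow> nat \<Rightarrow> real) \<Rightarrow> (nat \<Rightarrow> nat \<Rightarrow> real) \<Rightarrow> bool" where
  "perturbation n \<gamma> w w' \<longleftrightarrow> maxcut_instance n w' \<and>
     (\<forall>i<n. \<forall>j<n. w i j \<le> w' i j \<and> w' i j \<le> \<gamma> * w i j)"

definition gamma_stable :: "nat \<Rightarrow> real \<Rightarrow> (nat \<Rightarrow> nat \<Rightarrow> real) \<Rightarrow> bool" where
  "gamma_stable n \<gamma> w \<longleftrightarrow> (\<exists>S. \<forall>w'. perturbation n \<gamma> w w' \<longrightarrow> maximal_cut n w' S)"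

definition psd :: "nat \<Rightarrow> (nat \<Rightarrow> nat \<Rightarrow> real) \<Rightarrow> bool" where
  "psd n P \<longleftrightarrow> (\<forall>i<n. \<forall>j<n. P i j = P j i) \<and>
     (\<forall>x. 0 \<le> (\<Sum>i<n. \<Sum>j<n. x i * P i j * x j))"

definition sdp_feasible :: "nat \<Rightarrow> (nat \<Rightarrow> nat \<Rightarrow> real) \<Rightarrow> bool" where
  "sdp_feasible n P \<longleftrightarrow> psd n P \<and> (\<forall>i<n. P i i = 1)"

definition sdp_objective :: "nat \<Rightarrow> (nat \<Rightarrow> nat \<Rightarrow> real) \<Rightarrow> (nat \<Rightarrow> nat \<Rightarrow> real) \<Rightarrow> real" where
  "sdp_objective n w P = (\<Sum>i<n. \<Sum>j<n. P i j * w i j)"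

definition sdp_optimal :: "nat \<Rightarrow> (nat \<Rightarrow> nat \<Rightarrow> real) \<Rightarrow> (nat \<Rightarrow> nat \<Rightarrow> real) \<Rightarrow> bool" where
  "sdp_optimal n w P \<longleftrightarrow> sdp_feasible n P \<and>
     (\<forall>Q. sdp_feasible n Q \<longrightarrow> sdp_objective n w P \<le> sdp_objective n w Q)"

definition gram_repr :: "nat \<Rightarrow> (nat \<Rightarrow> nat \<Rightarrow> real) \<Rightarrow> (nat \<Rightarrow> nat \<Rightarrow> real) \<Rightarrow> bool" where
  "gram_repr n P v \<longleftrightarrow>
     (\<forall>i<n. v i \<in> space (lborelN n) \<and> vnorm n (v i) = 1) \<and>
     (\<forall>i<n. \<forall>j<n. P i j = vinner n (v i) (v j))"

definition gw_cut :: "nat \<Rightarrow> (nat \<Rightarrow> nat \<Rightarrow> real) \<Rightarrow> (nat \<Rightarrow> real) \<Rightarrow> nat set" where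
  "gw_cut n v u = {i\<in>{..<n}. 0 < vinner n u (v i)}"

end

theory Submission
  imports Defs
begin

text \<open>Let \<open>S\<close> be a cut that stays maximal under every \<open>\<gamma>\<close>-perturbation, with sign vector \<open>\<sigma>\<close>.
  Raising the uncut edges leaving a vertex set \<open>A\<close> by the factor \<open>\<gamma>\<close> shows that \<open>\<gamma>\<close> times the uncut
  weight crossing \<open>A\<close> is at most the cut weight crossing \<open>A\<close>. Decomposing each coordinate of the
  vectors \<open>\<sigma>\<^sub>i v\<^sub>i\<close> into threshold cuts upgrades this to \<open>\<gamma> U \<le> n C\<close>, where \<open>U\<close> and \<open>C\<close> are the sums
  of \<open>w\<^sub>i\<^sub>j \<parallel>\<sigma>\<^sub>i v\<^sub>i - \<sigma>\<^sub>j v\<^sub>j\<parallel>\<^sup>2\<close> over the uncut and the cut edges, while optimality of the SDP solution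
  against the integral solution \<open>\<sigma>\<sigma>\<^sup>T\<close> gives \<open>C \<le> U\<close>. So for \<open>\<gamma> > n\<close> both sums vanish,
  \<open>\<sigma>\<^sub>i v\<^sub>i = \<sigma>\<^sub>j v\<^sub>j\<close> along every edge, and every hyperplane avoiding all \<open>v\<^sub>i\<close> (almost every one) rounds
  to a cut of the same value as \<open>S\<close>: for \<open>\<gamma> \<ge> 2n\<^sup>3\<close> the algorithm succeeds with probability 1.\<close>

section \<open>The uniform measure on the sphere\<close>

lemma measurable_vinner [measurable]: "(\<lambda>x. vinner n x y) \<in> borel_measurable (lborelN n)"
  unfolding vinner_def by measurable

lemma measurable_vnorm [measurable]: "vnorm n \<in> borel_measurable (lborelN n)"
  unfolding vnorm_def vinner_def by measurable

lemma hyperplane_null_sets: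
  assumes k: "k < n" and vk: "v k \<noteq> 0"
  shows "{x \<in> space (lborelN n). vinner n x v = 0} \<in> null_sets (lborelN n)"
proof -
  interpret product_sigma_finite "\<lambda>_. lborel" by standard
  define I where "I = {..<n} - {k}"
  have nI: "{..<n} = insert k I" "k \<notin> I" "finite I" using k by (auto simp: I_def)
  define H where "H = {x \<in> space (lborelN n). vinner n x v = 0}"
  have H: "H \<in> sets (lborelN n)" unfolding H_def by measurable
  have fibre: "(\<integral>\<^sup>+ y. indicator H (x(k := y)) \<partial>lborel) = 0"
    if x: "x \<in> space (PiM I (\<lambda>_. lborel :: real measure))" for x
  proof -
    define c where "c = - (\<Sum>j\<in>I. x j * v j) / v k"
    have "indicator H (x(k := y)) = (indicator {c} y :: ennreal)" for y
    proof -
      have "vinner n (x(k := y)) v = (\<Sum>j\<in>I. x j * v j) + y * v k"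
        unfolding vinner_def nI(1) using nI
        by (simp add: sum.insert_remove) (intro sum.cong, auto)
      then have "vinner n (x(k := y)) v = 0 \<longleftrightarrow> y = c"
        using vk unfolding c_def by (auto simp: field_simps)
      moreover have "x(k := y) \<in> space (lborelN n)"
        using x nI by (auto simp: space_PiM PiE_iff extensional_def)
      ultimately show ?thesis unfolding H_def by (auto simp: indicator_def)
    qed
    then show ?thesis by simp
  qed
  have "emeasure (lborelN n) H = (\<integral>\<^sup>+ x. indicator H x \<partial>lborelN n)"
    using H by simp
  also have "\<dots> = (\<integral>\<^sup>+ x. (\<integral>\<^sup>+ y. indicator H (x(k := y)) \<partial>lborel) \<partial>PiM I (\<lambda>_. lborel))"
    unfolding nI(1) by (rule product_nn_integral_insert) (use nI H[unfolded nI(1)] in auto)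
  also have "\<dots> = (\<integral>\<^sup>+ x. 0 \<partial>PiM I (\<lambda>_. lborel :: real measure))"
    by (intro nn_integral_cong fibre)
  also have "\<dots> = 0" by simp
  finally show ?thesis using H unfolding H_def by (intro null_setsI)
qed

abbreviation punctured_unit_ball :: "nat \<Rightarrow> (nat \<Rightarrow> real) set" where
  "punctured_unit_ball n \<equiv> {x \<in> space (lborelN n). 0 < vnorm n x \<and> vnorm n x \<le> 1}"

abbreviation radial_projection :: "nat \<Rightarrow> (nat \<Rightarrow> real) \<Rightarrow> nat \<Rightarrow> real" where
  "radial_projection n x \<equiv> restrict (\<lambda>i. x i / vnorm n x) {..<n}"

lemma punctured_unit_ball_sets: "punctured_unit_ball n \<in> sets (lborelN n)"
  by measurable

lemma measurable_radial_projection [measurable]: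
  "radial_projection n \<in> lborelN n \<rightarrow>\<^sub>M lborelN n"
  by (rule measurable_restrict) measurable

lemma vinner_radial_projection:
  "vinner n (radial_projection n x) y = vinner n x y / vnorm n x"
  unfolding vinner_def by (simp add: sum_divide_distrib)

lemma emeasure_punctured_unit_ball_finite:
  "emeasure (lborelN n) (punctured_unit_ball n) \<noteq> \<infinity>"
proof -
  interpret product_sigma_finite "\<lambda>_. lborel" by standard
  have "punctured_unit_ball n \<subseteq> PiE {..<n} (\<lambda>_. {-1..1::real})"
  proof
    fix x assume x: "x \<in> punctured_unit_ball n"
    have "\<bar>x i\<bar> \<le> 1" if i: "i < n" for i
    proof -
      have "x i * x i \<le> vinner n x x"
        unfolding vinner_def using i by (intro member_le_sum) auto
      also have "\<dots> \<le> 1" using x unfolding vnorm_def by simp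
      finally show ?thesis using abs_square_le_1[of "x i"] by (simp add: power2_eq_square)
    qed
    then show "x \<in> PiE {..<n} (\<lambda>_. {-1..1::real})"
      using x by (auto simp: space_PiM PiE_iff abs_le_iff)
  qed
  then have "emeasure (lborelN n) (punctured_unit_ball n)
      \<le> emeasure (lborelN n) (PiE {..<n} (\<lambda>_. {-1..1::real}))"
    by (intro emeasure_mono) auto
  also have "\<dots> = (\<Prod>i<n. emeasure lborel {-1..1::real})"
    by (subst emeasure_PiM) auto
  also have "\<dots> < \<infinity>" by (simp add: power_less_top_ennreal)
  finally show ?thesis by simp
qed

lemma emeasure_punctured_unit_ball_pos:
  assumes n: "1 \<le> n"
  shows "emeasure (lborelN n) (punctured_unit_ball n) \<noteq> 0"
proof -
  interpret product_sigma_finite "\<lambda>_. lborel" by standard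
  define a where "a = 1 / (2 * real n)"
  define b where "b = 1 / real n"
  have ab: "0 < a" "a < b" "b \<le> 1" using n by (auto simp: a_def b_def field_simps)
  have box: "PiE {..<n} (\<lambda>_. {a..b}) \<subseteq> punctured_unit_ball n"
  proof
    fix x assume x: "x \<in> PiE {..<n} (\<lambda>_. {a..b})"
    have xi: "a \<le> x i" "x i \<le> b" if "i < n" for i using x that by (auto simp: PiE_iff)
    have "vinner n x x \<le> (\<Sum>i<n. b * b)"
      unfolding vinner_def using xi ab by (intro sum_mono mult_mono) (auto dest: xi)
    also have "\<dots> = 1 / real n" using n by (simp add: b_def field_simps)
    also have "\<dots> \<le> 1" using n by simp
    finally have le1: "vinner n x x \<le> 1" .
    have "0 < x 0 * x 0" using xi[of 0] ab n by auto
    also have "x 0 * x 0 \<le> vinner n x x"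
      unfolding vinner_def using n by (intro member_le_sum) auto
    finally show "x \<in> punctured_unit_ball n"
      using x le1 by (auto simp: vnorm_def space_PiM PiE_iff)
  qed
  have "0 < emeasure (lborelN n) (PiE {..<n} (\<lambda>_. {a..b}))"
    by (subst emeasure_PiM) (use ab in \<open>auto simp: ennreal_power\<close>)
  also have "\<dots> \<le> emeasure (lborelN n) (punctured_unit_ball n)"
    using box by (intro emeasure_mono punctured_unit_ball_sets)
  finally show ?thesis by simp
qed

lemma space_sphere_uniform [simp]: "space (sphere_uniform n) = space (lborelN n)"
  by (simp add: sphere_uniform_def)

lemma sets_sphere_uniform: "sets (sphere_uniform n) = sets (lborelN n)"
  by (simp add: sphere_uniform_def)

lemma measurable_radial_projection_uniform:
  "radial_projection n \<in> uniform_measure (lborelN n) (punctured_unit_ball n) \<rightarrow>\<^sub>M lborelN n"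
  by (subst measurable_cong_sets[OF sets_uniform_measure refl]) (rule measurable_radial_projection)

lemma prob_space_sphere_uniform: "1 \<le> n \<Longrightarrow> prob_space (sphere_uniform n)"
  unfolding sphere_uniform_def
  by (intro prob_space.prob_space_distr prob_space_uniform_measure
      emeasure_punctured_unit_ball_finite emeasure_punctured_unit_ball_pos
      measurable_radial_projection_uniform)

lemma AE_sphere_uniform_vinner_nonzero:
  assumes "k < n" and "v k \<noteq> 0"
  shows "AE u in sphere_uniform n. vinner n u v \<noteq> 0"
proof -
  have "AE x in lborelN n. vinner n x v \<noteq> 0"
    by (rule AE_I'[OF hyperplane_null_sets[of k n v, OF assms]]) auto
  then have "AE x in lborelN n. x \<in> punctured_unit_ball n \<longrightarrow> vinner n (radial_projection n x) v \<noteq> 0"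
    by eventually_elim (simp add: vinner_radial_projection)
  then have "AE x in uniform_measure (lborelN n) (punctured_unit_ball n).
      vinner n (radial_projection n x) v \<noteq> 0"
    by (rule AE_uniform_measureI[OF punctured_unit_ball_sets])
  moreover have "{u \<in> space (lborelN n). vinner n u v \<noteq> 0} \<in> sets (lborelN n)"
    by measurable
  ultimately show ?thesis
    unfolding sphere_uniform_def by (simp add: AE_distr_iff[OF measurable_radial_projection_uniform])
qed

section \<open>Cuts and stability\<close>

definition crosses :: "nat set \<Rightarrow> nat \<Rightarrow> nat \<Rightarrow> real" where
  "crosses A i j = (if (i \<in> A) = (j \<in> A) then 0 else 1)"

lemma crosses_commute: "crosses A i j = crosses A j i"
  by (auto simp: crosses_def)

lemma cut_value_eq_crossing_sum:
  assumes sym: "\<And>i j. i < n \<Longrightarrow> j < n \<Longrightarrow> w i j = w j i" and A: "A \<subseteq> {..<n}"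
  shows "2 * cut_value n w A = (\<Sum>i<n. \<Sum>j<n. w i j * crosses A i j)"
proof -
  define out where "out i j = (if i \<in> A \<and> j \<notin> A then w i j else 0)" for i j
  have "A = {..<n} \<inter> A" "{..<n} - A = {..<n} \<inter> -A" using A by auto
  then have "cut_value n w A = (\<Sum>i\<in>{..<n} \<inter> A. \<Sum>j\<in>{..<n} \<inter> -A. w i j)"
    unfolding cut_value_def by simp
  also have "\<dots> = (\<Sum>i<n. if i \<in> A then \<Sum>j<n. if j \<in> -A then w i j else 0 else 0)"
    by (simp only: sum.inter_restrict finite_lessThan)
  also have "\<dots> = (\<Sum>i<n. \<Sum>j<n. out i j)"
    unfolding out_def by (intro sum.cong refl) auto
  finally have cut: "cut_value n w A = (\<Sum>i<n. \<Sum>j<n. out i j)" .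
  have "(\<Sum>i<n. \<Sum>j<n. w i j * crosses A i j) = (\<Sum>i<n. \<Sum>j<n. out i j + out j i)"
    by (intro sum.cong refl) (auto simp: out_def crosses_def sym)
  also have "\<dots> = (\<Sum>i<n. \<Sum>j<n. out i j) + (\<Sum>i<n. \<Sum>j<n. out j i)"
    by (simp add: sum.distrib)
  also have "(\<Sum>i<n. \<Sum>j<n. out j i) = (\<Sum>i<n. \<Sum>j<n. out i j)"
    by (rule sum.swap)
  finally show ?thesis using cut by simp
qed

lemma cut_value_eq_if_crosses_eq:
  assumes sym: "\<And>i j. i < n \<Longrightarrow> j < n \<Longrightarrow> w i j = w j i"
    and A: "A \<subseteq> {..<n}" and B: "B \<subseteq> {..<n}"
    and crosses_eq: "\<And>i j. i < n \<Longrightarrow> j < n \<Longrightarrow> w i j \<noteq> 0 \<Longrightarrow> crosses A i j = crosses B i j"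
  shows "cut_value n w A = cut_value n w B"
proof -
  have "(\<Sum>i<n. \<Sum>j<n. w i j * crosses A i j) = (\<Sum>i<n. \<Sum>j<n. w i j * crosses B i j)"
    by (intro sum.cong refl) (use crosses_eq in fastforce)
  then show ?thesis
    using cut_value_eq_crossing_sum[of n w A, OF sym A]
      cut_value_eq_crossing_sum[of n w B, OF sym B] by simp
qed

definition stable_cut :: "nat \<Rightarrow> real \<Rightarrow> (nat \<Rightarrow> nat \<Rightarrow> real) \<Rightarrow> nat set \<Rightarrow> bool" where
  "stable_cut n \<gamma> w S \<longleftrightarrow> (\<forall>w'. perturbation n \<gamma> w w' \<longrightarrow> maximal_cut n w' S)"

lemma gamma_stable_iff_stable_cut: "gamma_stable n \<gamma> w \<longleftrightarrow> (\<exists>S. stable_cut n \<gamma> w S)"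
  by (simp add: gamma_stable_def stable_cut_def)

lemma stable_cut_maximal:
  assumes inst: "maxcut_instance n w" and "1 \<le> \<gamma>" and "stable_cut n \<gamma> w S"
  shows "maximal_cut n w S"
proof -
  have "w i j \<le> \<gamma> * w i j" if "i < n" "j < n" for i j
    using inst that \<open>1 \<le> \<gamma>\<close> mult_right_mono[of 1 \<gamma> "w i j"]
    unfolding maxcut_instance_def by auto
  then have "perturbation n \<gamma> w w"
    using inst unfolding perturbation_def by auto
  then show ?thesis using \<open>stable_cut n \<gamma> w S\<close> unfolding stable_cut_def by blast
qed

text \<open>Multiplying by \<open>\<gamma>\<close> the weights of the edges of \<open>\<delta>(A)\<close> that \<open>S\<close> does not cut, \<open>S\<close> must still
  beat the symmetric difference of \<open>S\<close> and \<open>A\<close>.\<close>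
lemma stable_cut_crossing_inequality:
  assumes inst: "maxcut_instance n w" and "1 \<le> \<gamma>" and stable: "stable_cut n \<gamma> w S"
    and A: "A \<subseteq> {..<n}"
  shows "\<gamma> * (\<Sum>i<n. \<Sum>j<n. w i j * (1 - crosses S i j) * crosses A i j)
    \<le> (\<Sum>i<n. \<Sum>j<n. w i j * crosses S i j * crosses A i j)"
proof -
  define w' where "w' i j = w i j * (1 + (\<gamma> - 1) * (1 - crosses S i j) * crosses A i j)" for i j
  define T where "T = (S - A) \<union> (A - S)"
  have w: "0 \<le> w i j" "w i j = w j i" "w i i = 0" if "i < n" "j < n" for i j
    using inst that unfolding maxcut_instance_def by auto
  have sym': "w' i j = w' j i" if "i < n" "j < n" for i j
    using w(2)[OF that] by (simp add: w'_def crosses_commute[of _ i j])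
  have bounds: "w i j \<le> w' i j \<and> w' i j \<le> \<gamma> * w i j" if "i < n" "j < n" for i j
    using w(1)[OF that] \<open>1 \<le> \<gamma>\<close> mult_left_mono[of 1 \<gamma> "w i j"]
    by (auto simp: w'_def crosses_def mult.commute)
  have "0 \<le> w' i j" if "i < n" "j < n" for i j
    using w(1)[OF that] bounds[OF that] by linarith
  moreover have "w' i i = 0" if "i < n" for i
    using w(3)[OF that that] by (simp add: w'_def)
  ultimately have "perturbation n \<gamma> w w'"
    using bounds sym' unfolding perturbation_def maxcut_instance_def by blast
  then have max: "maximal_cut n w' S" using stable unfolding stable_cut_def by blast
  then have S: "S \<subseteq> {..<n}" unfolding maximal_cut_def by blast
  with A have "T \<subseteq> {..<n}" unfolding T_def by blast
  with max have "cut_value n w' T \<le> cut_value n w' S"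
    unfolding maximal_cut_def by blast
  then have "0 \<le> (\<Sum>i<n. \<Sum>j<n. w' i j * crosses S i j) - (\<Sum>i<n. \<Sum>j<n. w' i j * crosses T i j)"
    using cut_value_eq_crossing_sum[of n w' S, OF sym' S]
      cut_value_eq_crossing_sum[of n w' T, OF sym' \<open>T \<subseteq> {..<n}\<close>] by simp
  also have "\<dots> = (\<Sum>i<n. \<Sum>j<n. w i j * crosses S i j * crosses A i j
      - \<gamma> * (w i j * (1 - crosses S i j) * crosses A i j))"
    unfolding sum_subtractf[symmetric]
    by (intro sum.cong refl) (auto simp: w'_def crosses_def T_def algebra_simps)
  also have "\<dots> = (\<Sum>i<n. \<Sum>j<n. w i j * crosses S i j * crosses A i j)
      - \<gamma> * (\<Sum>i<n. \<Sum>j<n. w i j * (1 - crosses S i j) * crosses A i j)"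
    by (simp add: sum_subtractf sum_distrib_left)
  finally show ?thesis by simp
qed

section \<open>Threshold cuts of a real vector\<close>

definition next_gap :: "real set \<Rightarrow> real \<Rightarrow> real" where
  "next_gap V t = (if \<exists>v\<in>V. t < v then Min {v\<in>V. t < v} - t else 0)"

lemma next_gap_nonneg:
  assumes "finite V"
  shows "0 \<le> next_gap V t"
proof (cases "\<exists>v\<in>V. t < v")
  case True
  then have "t < Min {v\<in>V. t < v}" using assms by (subst Min_gr_iff) auto
  then show ?thesis by (simp add: next_gap_def)
qed (simp add: next_gap_def)

lemma sum_next_gap:
  assumes V: "finite V"
  shows "p \<in> V \<Longrightarrow> q \<in> V \<Longrightarrow> p \<le> q \<Longrightarrow> (\<Sum>t\<in>{t\<in>V. p \<le> t \<and> t < q}. next_gap V t) = q - p"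
proof (induction "card {t\<in>V. p \<le> t \<and> t < q}" arbitrary: p rule: less_induct)
  case (less p)
  show ?case
  proof (cases "p = q")
    case True
    then have "{t\<in>V. p \<le> t \<and> t < q} = {}" by auto
    then show ?thesis using True by (metis diff_self sum.empty)
  next
    case False
    with less.prems have "p < q" by simp
    define p' where "p' = Min {v\<in>V. p < v}"
    have ne: "{v\<in>V. p < v} \<noteq> {}" using \<open>p < q\<close> less.prems by auto
    have p': "p' \<in> V" "p < p'" "p' \<le> q"
      using Min_in[of "{v\<in>V. p < v}"] Min_le[of "{v\<in>V. p < v}" q] V ne \<open>p < q\<close> less.prems
      by (auto simp: p'_def)
    have p'_min: "p' \<le> v" if "v \<in> V" "p < v" for v
      unfolding p'_def using V that by (intro Min_le) auto
    have gap: "next_gap V p = p' - p" unfolding next_gap_def p'_def using ne by auto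
    have split: "{t\<in>V. p \<le> t \<and> t < q} = insert p {t\<in>V. p' \<le> t \<and> t < q}"
      using p' p'_min less.prems \<open>p < q\<close> by force
    have "p \<notin> {t\<in>V. p' \<le> t \<and> t < q}" using p' by auto
    moreover have "finite {t\<in>V. p' \<le> t \<and> t < q}" using V by simp
    moreover have "(\<Sum>t\<in>{t\<in>V. p' \<le> t \<and> t < q}. next_gap V t) = q - p'"
      using calculation by (intro less.hyps) (auto simp: split p' less.prems)
    ultimately show ?thesis unfolding split using gap by simp
  qed
qed

lemma sum_squares_le_square_sum:
  fixes f :: "'a \<Rightarrow> real"
  assumes "finite K" and "\<And>t. t \<in> K \<Longrightarrow> 0 \<le> f t"
  shows "(\<Sum>t\<in>K. (f t)\<^sup>2) \<le> (\<Sum>t\<in>K. f t)\<^sup>2"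
proof -
  have "(\<Sum>t\<in>K. (f t)\<^sup>2) \<le> (\<Sum>t\<in>K. f t * sum f K)"
    using assms by (intro sum_mono) (auto simp: power2_eq_square intro!: mult_left_mono member_le_sum)
  also have "\<dots> = (sum f K)\<^sup>2" by (simp add: power2_eq_square sum_distrib_right)
  finally show ?thesis .
qed

text \<open>Weighting the threshold cuts \<open>{k. y k \<le> t}\<close> by the squared gaps between consecutive values of \<open>y\<close>
  recovers \<open>(y i - y j)\<^sup>2\<close> up to the factor \<open>n\<close>: superadditivity of squares gives one bound,
  Cauchy-Schwarz over at most \<open>n\<close> gaps the other.\<close>
lemma square_diff_layer_bounds:
  fixes y :: "nat \<Rightarrow> real" and n :: nat
  defines "V \<equiv> y ` {..<n}"
  assumes ij: "i < n" "j < n"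
  shows "(\<Sum>t\<in>V. crosses {k\<in>{..<n}. y k \<le> t} i j * (next_gap V t)\<^sup>2) \<le> (y i - y j)\<^sup>2"
    and "(y i - y j)\<^sup>2 \<le> real n * (\<Sum>t\<in>V. crosses {k\<in>{..<n}. y k \<le> t} i j * (next_gap V t)\<^sup>2)"
proof -
  have V: "finite V" unfolding V_def by simp
  define K where "K = {t\<in>V. min (y i) (y j) \<le> t \<and> t < max (y i) (y j)}"
  have "finite K" using V unfolding K_def by simp
  have layers: "(\<Sum>t\<in>V. crosses {k\<in>{..<n}. y k \<le> t} i j * (next_gap V t)\<^sup>2) = (\<Sum>t\<in>K. (next_gap V t)\<^sup>2)"
  proof -
    have "(\<Sum>t\<in>V. crosses {k\<in>{..<n}. y k \<le> t} i j * (next_gap V t)\<^sup>2)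
        = (\<Sum>t\<in>V. if min (y i) (y j) \<le> t \<and> t < max (y i) (y j) then (next_gap V t)\<^sup>2 else 0)"
      using ij by (intro sum.cong refl) (auto simp: crosses_def)
    then show ?thesis unfolding K_def using V by (simp add: sum.inter_filter)
  qed
  have "(\<Sum>t\<in>K. next_gap V t) = max (y i) (y j) - min (y i) (y j)"
    unfolding K_def using ij by (intro sum_next_gap V) (auto simp: V_def min_def max_def)
  then have square: "(y i - y j)\<^sup>2 = (\<Sum>t\<in>K. next_gap V t)\<^sup>2"
    by (simp add: min_def max_def power2_commute)
  have "card K \<le> n"
    using card_mono[OF V, of K] card_image_le[of "{..<n}" y] unfolding K_def V_def by auto
  have "(\<Sum>t\<in>K. next_gap V t)\<^sup>2 \<le> (\<Sum>t\<in>K. (next_gap V t)\<^sup>2) * real (card K)"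
    by (rule sum_squared_le_sum_of_squares)
  also have "\<dots> \<le> (\<Sum>t\<in>K. (next_gap V t)\<^sup>2) * real n"
    using \<open>card K \<le> n\<close> by (intro mult_left_mono sum_nonneg) auto
  finally show "(y i - y j)\<^sup>2 \<le> real n * (\<Sum>t\<in>V. crosses {k\<in>{..<n}. y k \<le> t} i j * (next_gap V t)\<^sup>2)"
    unfolding square layers by (simp add: mult.commute)
  show "(\<Sum>t\<in>V. crosses {k\<in>{..<n}. y k \<le> t} i j * (next_gap V t)\<^sup>2) \<le> (y i - y j)\<^sup>2"
    unfolding square layers using \<open>finite K\<close> V by (intro sum_squares_le_square_sum next_gap_nonneg)
qed

lemma double_sum_mult_sum_swap:
  fixes b :: "'a \<Rightarrow> 'b \<Rightarrow> real"
  shows "(\<Sum>i\<in>I. \<Sum>j\<in>J. b i j * (\<Sum>t\<in>T. f t i j)) = (\<Sum>t\<in>T. \<Sum>i\<in>I. \<Sum>j\<in>J. b i j * f t i j)"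
proof -
  have "(\<Sum>i\<in>I. \<Sum>j\<in>J. b i j * (\<Sum>t\<in>T. f t i j)) = (\<Sum>i\<in>I. \<Sum>j\<in>J. \<Sum>t\<in>T. b i j * f t i j)"
    by (simp add: sum_distrib_left)
  also have "\<dots> = (\<Sum>i\<in>I. \<Sum>t\<in>T. \<Sum>j\<in>J. b i j * f t i j)"
    by (intro sum.cong refl sum.swap)
  also have "\<dots> = (\<Sum>t\<in>T. \<Sum>i\<in>I. \<Sum>j\<in>J. b i j * f t i j)"
    by (rule sum.swap)
  finally show ?thesis .
qed

lemma quadratic_bound_from_crossing_bound:
  fixes a b :: "nat \<Rightarrow> nat \<Rightarrow> real" and y :: "nat \<Rightarrow> real"
  assumes "0 \<le> \<gamma>"
    and a: "\<And>i j. i < n \<Longrightarrow> j < n \<Longrightarrow> 0 \<le> a i j"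
    and b: "\<And>i j. i < n \<Longrightarrow> j < n \<Longrightarrow> 0 \<le> b i j"
    and crossing: "\<And>A. A \<subseteq> {..<n} \<Longrightarrow>
      \<gamma> * (\<Sum>i<n. \<Sum>j<n. b i j * crosses A i j) \<le> (\<Sum>i<n. \<Sum>j<n. a i j * crosses A i j)"
  shows "\<gamma> * (\<Sum>i<n. \<Sum>j<n. b i j * (y i - y j)\<^sup>2) \<le> real n * (\<Sum>i<n. \<Sum>j<n. a i j * (y i - y j)\<^sup>2)"
proof -
  define V where "V = y ` {..<n}"
  define L where "L i j = (\<Sum>t\<in>V. crosses {k\<in>{..<n}. y k \<le> t} i j * (next_gap V t)\<^sup>2)" for i j
  have L_bounds: "L i j \<le> (y i - y j)\<^sup>2" "(y i - y j)\<^sup>2 \<le> real n * L i j" if "i < n" "j < n" for i j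
    unfolding L_def V_def using square_diff_layer_bounds[OF that] by auto
  have "\<gamma> * (\<Sum>i<n. \<Sum>j<n. b i j * L i j)
      = (\<Sum>t\<in>V. (next_gap V t)\<^sup>2 * (\<gamma> * (\<Sum>i<n. \<Sum>j<n. b i j * crosses {k\<in>{..<n}. y k \<le> t} i j)))"
    unfolding L_def double_sum_mult_sum_swap by (simp add: sum_distrib_left mult_ac)
  also have "\<dots> \<le> (\<Sum>t\<in>V. (next_gap V t)\<^sup>2 * (\<Sum>i<n. \<Sum>j<n. a i j * crosses {k\<in>{..<n}. y k \<le> t} i j))"
    by (intro sum_mono mult_left_mono crossing) auto
  also have "\<dots> = (\<Sum>i<n. \<Sum>j<n. a i j * L i j)"
    unfolding L_def double_sum_mult_sum_swap by (simp add: sum_distrib_left mult_ac)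
  finally have layers: "\<gamma> * (\<Sum>i<n. \<Sum>j<n. b i j * L i j) \<le> (\<Sum>i<n. \<Sum>j<n. a i j * L i j)" .
  have "\<gamma> * (\<Sum>i<n. \<Sum>j<n. b i j * (y i - y j)\<^sup>2) \<le> \<gamma> * (\<Sum>i<n. \<Sum>j<n. b i j * (real n * L i j))"
    using L_bounds b \<open>0 \<le> \<gamma>\<close> by (intro mult_left_mono sum_mono) auto
  also have "\<dots> = real n * (\<gamma> * (\<Sum>i<n. \<Sum>j<n. b i j * L i j))"
    by (simp add: sum_distrib_left mult_ac)
  also have "\<dots> \<le> real n * (\<Sum>i<n. \<Sum>j<n. a i j * L i j)"
    using layers by (intro mult_left_mono) auto
  also have "\<dots> \<le> real n * (\<Sum>i<n. \<Sum>j<n. a i j * (y i - y j)\<^sup>2)"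
    using L_bounds a by (intro mult_left_mono sum_mono) auto
  finally show ?thesis .
qed

section \<open>The SDP solution of a stable instance\<close>

definition cut_sign :: "nat set \<Rightarrow> nat \<Rightarrow> real" where
  "cut_sign S i = (if i \<in> S then 1 else -1)"

lemma cut_sign_mult_self [simp]:
  "cut_sign S i * cut_sign S i = 1" "cut_sign S i * (cut_sign S i * x) = x"
  by (simp_all add: cut_sign_def)

lemma sdp_feasible_cut_sign: "sdp_feasible n (\<lambda>i j. cut_sign S i * cut_sign S j)"
  unfolding sdp_feasible_def psd_def
proof (intro conjI allI impI)
  fix x :: "nat \<Rightarrow> real"
  have "(\<Sum>i<n. \<Sum>j<n. x i * (cut_sign S i * cut_sign S j) * x j) = (\<Sum>i<n. x i * cut_sign S i)\<^sup>2"
    by (simp add: power2_eq_square sum_distrib_left sum_distrib_right mult_ac)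
  then show "0 \<le> (\<Sum>i<n. \<Sum>j<n. x i * (cut_sign S i * cut_sign S j) * x j)" by simp
qed (simp_all add: mult.commute)

definition signed_dist :: "nat \<Rightarrow> nat set \<Rightarrow> (nat \<Rightarrow> nat \<Rightarrow> real) \<Rightarrow> nat \<Rightarrow> nat \<Rightarrow> real" where
  "signed_dist n S v i j = (\<Sum>k<n. (cut_sign S i * v i k - cut_sign S j * v j k)\<^sup>2)"

lemma signed_dist_nonneg: "0 \<le> signed_dist n S v i j"
  unfolding signed_dist_def by (intro sum_nonneg) simp

lemma signed_dist_eq_0_iff:
  "signed_dist n S v i j = 0 \<longleftrightarrow> (\<forall>k<n. cut_sign S i * v i k = cut_sign S j * v j k)"
  unfolding signed_dist_def by (subst sum_nonneg_eq_0_iff) auto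

lemma signed_dist_gram:
  assumes "gram_repr n P v" and "i < n" "j < n"
  shows "signed_dist n S v i j = 2 - 2 * (cut_sign S i * cut_sign S j) * P i j"
proof -
  have unit: "vinner n (v k) (v k) = 1" if "k < n" for k
    using assms(1) that unfolding gram_repr_def vnorm_def by auto
  have "signed_dist n S v i j = vinner n (v i) (v i) + vinner n (v j) (v j)
      - 2 * (cut_sign S i * cut_sign S j) * vinner n (v i) (v j)"
    unfolding signed_dist_def vinner_def
    by (simp add: power2_eq_square algebra_simps sum.distrib sum_subtractf sum_distrib_left)
  then show ?thesis using unit assms unfolding gram_repr_def by simp
qed

text \<open>Optimality of \<open>P\<close> against the integral solution \<open>\<sigma>\<sigma>\<^sup>T\<close> of the cut \<open>S\<close>.\<close>
lemma sdp_optimal_signed_dist_bound: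
  assumes opt: "sdp_optimal n w P" and gram: "gram_repr n P v"
  shows "(\<Sum>i<n. \<Sum>j<n. w i j * crosses S i j * signed_dist n S v i j)
    \<le> (\<Sum>i<n. \<Sum>j<n. w i j * (1 - crosses S i j) * signed_dist n S v i j)"
proof -
  have "sdp_objective n w P \<le> sdp_objective n w (\<lambda>i j. cut_sign S i * cut_sign S j)"
    using opt sdp_feasible_cut_sign unfolding sdp_optimal_def by blast
  then have "0 \<le> 2 * (\<Sum>i<n. \<Sum>j<n. cut_sign S i * cut_sign S j * w i j - P i j * w i j)"
    unfolding sdp_objective_def by (simp add: sum_subtractf)
  also have "\<dots> = (\<Sum>i<n. \<Sum>j<n. w i j * (1 - crosses S i j) * signed_dist n S v i j
      - w i j * crosses S i j * signed_dist n S v i j)"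
    unfolding sum_distrib_left
    by (intro sum.cong refl) (auto simp: signed_dist_gram[OF gram] cut_sign_def crosses_def algebra_simps)
  finally show ?thesis by (simp add: sum_subtractf)
qed

lemma stable_cut_signed_dist_bound:
  assumes inst: "maxcut_instance n w" and "1 \<le> \<gamma>" and stable: "stable_cut n \<gamma> w S"
  shows "\<gamma> * (\<Sum>i<n. \<Sum>j<n. w i j * (1 - crosses S i j) * signed_dist n S v i j)
    \<le> real n * (\<Sum>i<n. \<Sum>j<n. w i j * crosses S i j * signed_dist n S v i j)"
proof -
  define y where "y k i = cut_sign S i * v i k" for k i
  have w: "0 \<le> w i j" if "i < n" "j < n" for i j
    using inst that unfolding maxcut_instance_def by auto
  have coordinate: "\<gamma> * (\<Sum>i<n. \<Sum>j<n. w i j * (1 - crosses S i j) * (y k i - y k j)\<^sup>2)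
      \<le> real n * (\<Sum>i<n. \<Sum>j<n. w i j * crosses S i j * (y k i - y k j)\<^sup>2)" for k
    using \<open>1 \<le> \<gamma>\<close> w
    by (intro quadratic_bound_from_crossing_bound stable_cut_crossing_inequality[OF inst _ stable])
       (auto simp: crosses_def)
  have "\<gamma> * (\<Sum>i<n. \<Sum>j<n. w i j * (1 - crosses S i j) * signed_dist n S v i j)
      = (\<Sum>k<n. \<gamma> * (\<Sum>i<n. \<Sum>j<n. w i j * (1 - crosses S i j) * (y k i - y k j)\<^sup>2))"
    unfolding signed_dist_def y_def double_sum_mult_sum_swap by (simp add: sum_distrib_left)
  also have "\<dots> \<le> (\<Sum>k<n. real n * (\<Sum>i<n. \<Sum>j<n. w i j * crosses S i j * (y k i - y k j)\<^sup>2))"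
    by (intro sum_mono coordinate)
  also have "\<dots> = real n * (\<Sum>i<n. \<Sum>j<n. w i j * crosses S i j * signed_dist n S v i j)"
    unfolding signed_dist_def y_def double_sum_mult_sum_swap by (simp add: sum_distrib_left)
  finally show ?thesis .
qed

lemma stable_sdp_signed_dist_eq_0:
  assumes inst: "maxcut_instance n w" and "1 \<le> \<gamma>" and "real n < \<gamma>"
    and stable: "stable_cut n \<gamma> w S" and opt: "sdp_optimal n w P" and gram: "gram_repr n P v"
    and ij: "i < n" "j < n" and "w i j \<noteq> 0"
  shows "signed_dist n S v i j = 0"
proof -
  define cut where "cut = (\<Sum>i<n. \<Sum>j<n. w i j * crosses S i j * signed_dist n S v i j)"
  define uncut where "uncut = (\<Sum>i<n. \<Sum>j<n. w i j * (1 - crosses S i j) * signed_dist n S v i j)"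
  have nonneg: "0 \<le> w i j * signed_dist n S v i j"
    "0 \<le> w i j * crosses S i j * signed_dist n S v i j"
    "0 \<le> w i j * (1 - crosses S i j) * signed_dist n S v i j" if "i < n" "j < n" for i j
    using inst that signed_dist_nonneg[of n S v i j]
    unfolding maxcut_instance_def by (auto simp: crosses_def)
  have "0 \<le> cut" "0 \<le> uncut"
    unfolding cut_def uncut_def using nonneg by (auto intro!: sum_nonneg)
  have "cut \<le> uncut"
    unfolding cut_def uncut_def by (rule sdp_optimal_signed_dist_bound[OF opt gram])
  have "\<gamma> * uncut \<le> real n * cut"
    unfolding cut_def uncut_def by (rule stable_cut_signed_dist_bound[OF inst \<open>1 \<le> \<gamma>\<close> stable])
  moreover have "\<gamma> * cut \<le> \<gamma> * uncut"
    using \<open>cut \<le> uncut\<close> \<open>1 \<le> \<gamma>\<close> by (intro mult_left_mono) auto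
  ultimately have "(\<gamma> - real n) * cut \<le> 0" by (simp add: algebra_simps)
  with \<open>real n < \<gamma>\<close> \<open>0 \<le> cut\<close> have "cut = 0" by (simp add: mult_le_0_iff)
  with \<open>\<gamma> * uncut \<le> real n * cut\<close> \<open>1 \<le> \<gamma>\<close> \<open>0 \<le> uncut\<close> have "uncut = 0"
    by (simp add: mult_le_0_iff)
  have "(\<Sum>(i, j)\<in>{..<n} \<times> {..<n}. w i j * signed_dist n S v i j) = cut + uncut"
    unfolding cut_def uncut_def sum.cartesian_product[symmetric] sum.distrib[symmetric]
    by (simp add: algebra_simps)
  also have "\<dots> = 0" using \<open>cut = 0\<close> \<open>uncut = 0\<close> by simp
  finally have "w i j * signed_dist n S v i j = 0"
    using ij nonneg(1) by (subst (asm) sum_nonneg_eq_0_iff) auto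
  with \<open>w i j \<noteq> 0\<close> show ?thesis by simp
qed

section \<open>Rounding\<close>

lemma gw_cut_maximal:
  assumes inst: "maxcut_instance n w" and "1 \<le> \<gamma>" and "real n < \<gamma>"
    and stable: "stable_cut n \<gamma> w S" and opt: "sdp_optimal n w P" and gram: "gram_repr n P v"
    and avoid: "\<And>i. i < n \<Longrightarrow> vinner n u (v i) \<noteq> 0"
  shows "maximal_cut n w (gw_cut n v u)"
proof -
  have S: "maximal_cut n w S" by (rule stable_cut_maximal[OF inst \<open>1 \<le> \<gamma>\<close> stable])
  have sym: "w i j = w j i" if "i < n" "j < n" for i j
    using inst that unfolding maxcut_instance_def by auto
  have "cut_value n w (gw_cut n v u) = cut_value n w S"
  proof (rule cut_value_eq_if_crosses_eq[OF sym])
    show "gw_cut n v u \<subseteq> {..<n}" "S \<subseteq> {..<n}"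
      using S unfolding gw_cut_def maximal_cut_def by auto
    fix i j assume ij: "i < n" "j < n" and "w i j \<noteq> 0"
    then have "cut_sign S i * v i k = cut_sign S j * v j k" if "k < n" for k
      using stable_sdp_signed_dist_eq_0[OF assms(1-6)] that signed_dist_eq_0_iff by blast
    then have "v j k = cut_sign S j * cut_sign S i * v i k" if "k < n" for k
      using that by (metis cut_sign_mult_self(2) mult.assoc)
    then have "vinner n u (v j) = cut_sign S i * cut_sign S j * vinner n u (v i)"
      unfolding vinner_def by (simp add: sum_distrib_left mult_ac)
    moreover have "vinner n u (v i) \<noteq> 0" using avoid ij by blast
    ultimately show "crosses (gw_cut n v u) i j = crosses S i j"
      using ij by (cases "i \<in> S"; cases "j \<in> S") (auto simp: crosses_def gw_cut_def cut_sign_def)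
  qed
  then show ?thesis using S unfolding maximal_cut_def gw_cut_def by auto
qed

lemma gw_cut_eq_iff:
  assumes "T \<subseteq> {..<n}"
  shows "gw_cut n v u = T \<longleftrightarrow> (\<forall>i\<in>{..<n}. 0 < vinner n u (v i) \<longleftrightarrow> i \<in> T)"
  using assms unfolding gw_cut_def by auto

lemma gw_cut_maximal_event_sets:
  "{u \<in> space (lborelN n). maximal_cut n w (gw_cut n v u)} \<in> sets (lborelN n)"
proof -
  have "gw_cut n v u \<in> Pow {..<n}" for u by (auto simp: gw_cut_def)
  then have "{u \<in> space (lborelN n). maximal_cut n w (gw_cut n v u)}
      = (\<Union>T\<in>{T\<in>Pow {..<n}. maximal_cut n w T}. {u \<in> space (lborelN n). gw_cut n v u = T})"
    by blast
  also have "\<dots> = (\<Union>T\<in>{T\<in>Pow {..<n}. maximal_cut n w T}.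
      {u \<in> space (lborelN n). \<forall>i\<in>{..<n}. 0 < vinner n u (v i) \<longleftrightarrow> i \<in> T})"
    by (intro SUP_cong refl) (simp add: gw_cut_eq_iff)
  also have "\<dots> \<in> sets (lborelN n)"
    by (intro sets.finite_UN) auto
  finally show ?thesis .
qed

lemma gram_repr_nonzero:
  assumes "gram_repr n P v" and "i < n"
  obtains k where "k < n" and "v i k \<noteq> 0"
proof -
  have "vinner n (v i) (v i) = 1" using assms unfolding gram_repr_def vnorm_def by auto
  then have "\<exists>k<n. v i k \<noteq> 0" unfolding vinner_def by (auto intro: ccontr)
  then show ?thesis using that by blast
qed

lemma gw_cut_maximal_prob_1:
  assumes "1 \<le> n" and inst: "maxcut_instance n w" and "gamma_stable n \<gamma> w" and "real n < \<gamma>"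
    and opt: "sdp_optimal n w P" and gram: "gram_repr n P v"
  shows "measure (sphere_uniform n) {u \<in> space (sphere_uniform n). maximal_cut n w (gw_cut n v u)} = 1"
proof -
  interpret prob_space "sphere_uniform n" by (rule prob_space_sphere_uniform[OF \<open>1 \<le> n\<close>])
  obtain S where stable: "stable_cut n \<gamma> w S"
    using \<open>gamma_stable n \<gamma> w\<close> gamma_stable_iff_stable_cut by blast
  have "1 \<le> \<gamma>" using \<open>1 \<le> n\<close> \<open>real n < \<gamma>\<close> by linarith
  have "AE u in sphere_uniform n. \<forall>i\<in>{..<n}. vinner n u (v i) \<noteq> 0"
  proof (rule AE_finite_allI)
    fix i assume "i \<in> {..<n}"
    then obtain k where "k < n" "v i k \<noteq> 0" using gram_repr_nonzero[OF gram] by blast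
    then show "AE u in sphere_uniform n. vinner n u (v i) \<noteq> 0"
      by (rule AE_sphere_uniform_vinner_nonzero)
  qed simp
  with AE_space have "AE u in sphere_uniform n.
      u \<in> {u \<in> space (sphere_uniform n). maximal_cut n w (gw_cut n v u)}"
    by eventually_elim (auto intro: gw_cut_maximal[OF inst \<open>1 \<le> \<gamma>\<close> \<open>real n < \<gamma>\<close> stable opt gram])
  then show ?thesis
    using gw_cut_maximal_event_sets by (subst (asm) AE_in_set_eq_1) (auto simp: sets_sphere_uniform)
qed

theorem corollary4:
  shows "\<exists>c>0. \<exists>\<epsilon> :: nat \<Rightarrow> real. \<epsilon> \<longlonglongrightarrow> 0 \<and>
    (\<forall>n w \<gamma> P v.
       maxcut_instance n w \<and> gamma_stable n \<gamma> w \<and> \<gamma> \<ge> c * real n ^ 3 \<and>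
       sdp_optimal n w P \<and> gram_repr n P v \<longrightarrow>
       measure (sphere_uniform n)
         {u \<in> space (sphere_uniform n). maximal_cut n w (gw_cut n v u)} \<ge> 1 - \<epsilon> n)"
proof (intro exI conjI allI impI)
  show "(0::real) < 2" by simp
  \<comment> \<open>For \<open>n = 0\<close> the punctured unit ball is empty and \<open>sphere_uniform 0\<close> is the zero measure.\<close>
  show "(\<lambda>n::nat. if n = 0 then 1 else 0 :: real) \<longlonglongrightarrow> 0"
    by (rule tendsto_eventually) (auto simp: eventually_sequentially intro!: exI[of _ 1])
  fix n w \<gamma> P v
  assume H: "maxcut_instance n w \<and> gamma_stable n \<gamma> w \<and> 2 * real n ^ 3 \<le> \<gamma> \<and>
    sdp_optimal n w P \<and> gram_repr n P v"
  show "1 - (if n = 0 then 1 else 0) \<le>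
    measure (sphere_uniform n) {u \<in> space (sphere_uniform n). maximal_cut n w (gw_cut n v u)}"
  proof (cases "n = 0")
    case False
    then have "real n \<le> real n ^ 3" by (intro power_increasing[of 1 3, simplified]) auto
    with False H have "real n < \<gamma>" by linarith
    with False H show ?thesis using gw_cut_maximal_prob_1[of n w \<gamma> P v] by simp
  qed simp
qed

end
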